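(* Let $a\in\{-2,-1,0,1,2\}$. As formal power series in $q$ and $x$, $$\sum_{t\geq0} \widetilde{U}_t(a,q)x^t=\prod_{n=1}^{\infty}\frac{1}{(1+aq^{2n-1}+q^{2(2n-1)})(1-q^{2n})}\cdot \left(1+2\sum_{n\geq 1}te_n\left(\frac{x+a+2}{4}\right)q^{n^2}\right).$$
   Context: For $a\in\{-2,-1,0,1,2\}$ and integer $t\geq 0$, $\widetilde{U}_t(a,q)=\sum \prod_{k=1}^t \frac{q^{n_k}}{1+aq^{n_k}+q^{2n_k}}$, where the sum runs over all $t$-tuples of odd positive integers $n_1<n_2<\cdots<n_t$ (so $\widetilde{U}_0(a,q)=1$). $T_m$ denotes the Chebyshev polynomial of the first kind, $T_m(\cos\theta)=\cos(m\theta)$, and $te_n(x):=T_{2n}(\sqrt{x})$ (a polynomial in $x$). *)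

theory Defs
  imports "HOL-Analysis.Analysis" "HOL-Computational_Algebra.Formal_Power_Series"
    "HOL-Computational_Algebra.Polynomial"
begin

fun cheb :: "nat \<Rightarrow> real poly" where
  "cheb 0 = 1"
| "cheb (Suc 0) = [:0, 1:]"
| "cheb (Suc (Suc m)) = smult 2 [:0, 1:] * cheb (Suc m) - cheb m"

text \<open>te_n(x) = T_(2n)(sqrt x): T_(2n) is an even polynomial of degree 2n, so
  te_n is the polynomial whose k-th coefficient is the (2k)-th coefficient of T_(2n).\<close>
definition te :: "nat \<Rightarrow> real poly" where
  "te n = Poly (map (\<lambda>k. coeff (cheb (2 * n)) (2 * k)) [0..<Suc n])"

definition Ut :: "int \<Rightarrow> nat \<Rightarrow> 'a::{comm_ring_1,inverse} fps" where
  "Ut a t = infsum (\<lambda>S. \<Prod>n\<in>S. fps_X ^ n * inverse (1 + of_int a * fps_X ^ n + fps_X ^ (2 * n)))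
              {S. finite S \<and> card S = t \<and> (\<forall>n\<in>S. odd n)}"

definition fps_infprod :: "(nat \<Rightarrow> 'a::comm_ring_1 fps) \<Rightarrow> 'a fps" where
  "fps_infprod f = lim (\<lambda>N. \<Prod>n\<in>{1..N}. f n)"

end

(*
  Write q for the power series variable (the outer fps_X) and x for the inner one
  (fps_const fps_X), and put c = x + a.  Expanding the product over the odd n,
    sum_t U~_t x^t = prod_(n odd) (1 + x q^n / (1 + a q^n + q^(2n)))
                   = prod_(n odd) (1 + c q^n + q^(2n)) / (1 + a q^n + q^(2n)),
  so the theorem is Jacobi's triple product identity
    prod_(k>=1) (1 + c q^(2k-1) + q^(4k-2)) (1 - q^(2k)) = 1 + sum_(n>=1) V_n(c) q^(n^2),
  where V_n is the Lucas polynomial with V_n(z + 1/z) = z^n + z^-n, combined with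
  2 te_n((c + 2)/4) = V_n(c).  The triple product comes from its finite form
    prod_(k=1..N) (1 + z q^(2k-1)) (1 + z^-1 q^(2k-1)) = sum_(|i|<=N) [2N, N+i]_(q^2) q^(i^2) z^i:
  modulo q^(N+1), multiplying a term by (q^2;q^2)_N just removes the Gaussian binomial, so both
  sides of the triple product agree up to q^N.  This holds for c = z + 1/z with any real z > 1;
  since the coefficients are polynomials in c, it holds for every c.
*)
theory Submission
  imports Defs "HOL-Computational_Algebra.Polynomial_FPS"
begin

unbundle no vec_syntax
notation fps_nth (infixl \<open>$\<close> 75)

section \<open>Truncations, infinite sums and products of power series\<close>

lemma fps_X_power_mult_eq:
  "i + j = k \<Longrightarrow> fps_X ^ i * fps_X ^ j = (fps_X ^ k :: 'a::comm_semiring_1 fps)"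
  by (simp flip: power_add)

lemma fps_X_power_mult_swap:
  assumes "a + b = c + d"
  shows "fps_X ^ a * (g * fps_X ^ b) = fps_X ^ c * g * (fps_X ^ d :: 'a::comm_ring_1 fps)"
proof -
  have "fps_X ^ a * (g * fps_X ^ b) = g * (fps_X ^ (a + b) :: 'a fps)"
    by (simp only: power_add mult_ac)
  also have "\<dots> = fps_X ^ c * g * fps_X ^ d"
    by (simp only: assms power_add mult_ac)
  finally show ?thesis .
qed

lemma fps_cutoff_mult:
  fixes f g :: "'a::comm_semiring_0 fps"
  shows "fps_cutoff n (f * g) = fps_cutoff n (fps_cutoff n f * fps_cutoff n g)"
  by (rule fps_ext) (auto simp: fps_mult_nth intro!: sum.cong)

lemma fps_cutoff_mult_cong:
  fixes f g :: "'a::comm_semiring_0 fps"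
  shows "fps_cutoff n f = fps_cutoff n f' \<Longrightarrow> fps_cutoff n g = fps_cutoff n g' \<Longrightarrow>
    fps_cutoff n (f * g) = fps_cutoff n (f' * g')"
  by (metis fps_cutoff_mult)

lemma fps_cutoff_eq_mono:
  "fps_cutoff n f = fps_cutoff n g \<Longrightarrow> m \<le> n \<Longrightarrow> fps_cutoff m f = fps_cutoff m g"
  by (simp add: fps_cutoff_eq_fps_cutoff_iff)

lemma fps_cutoff_eq_nth: "fps_cutoff n f = fps_cutoff n g \<Longrightarrow> k < n \<Longrightarrow> f $ k = g $ k"
  by (simp add: fps_cutoff_eq_fps_cutoff_iff)

lemma fps_cutoff_cancel_unit:
  fixes f g u :: "'a::comm_ring_1 fps"
  assumes "fps_cutoff n (f * u) = fps_cutoff n (g * u)" "u * w = 1"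
  shows "fps_cutoff n f = fps_cutoff n g"
  using fps_cutoff_mult_cong[OF assms(1) refl, of w] assms(2) by (simp add: mult.assoc)

lemma fps_cutoff_inverse_eq_1:
  fixes f w :: "'a::comm_ring_1 fps"
  assumes "fps_cutoff n f = fps_cutoff n 1" "f * w = 1"
  shows "fps_cutoff n w = fps_cutoff n 1"
  using fps_cutoff_mult_cong[OF assms(1) refl, of w] assms(2) by simp

lemma fps_mult_inverse_eq_1:
  fixes f :: "'a::{comm_ring_1,inverse} fps"
  assumes "f $ 0 * inverse (f $ 0) = 1"
  shows "f * inverse f = 1"
  using fps_right_inverse[OF assms] by (simp add: fps_inverse_def)

lemma fps_inverse_eqI:
  fixes f g :: "'a::{comm_ring_1,inverse} fps"
  assumes "f * g = 1" "f $ 0 * inverse (f $ 0) = 1"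
  shows "inverse f = g"
proof -
  have "inverse f = (g * f) * inverse f"
    using assms(1) by (simp add: mult.commute)
  also have "\<dots> = g" using fps_mult_inverse_eq_1[OF assms(2)] by (simp add: mult.assoc)
  finally show ?thesis .
qed

lemma has_sum_fps:
  fixes f :: "'b \<Rightarrow> 'a::comm_ring_1 fps"
  assumes fin: "\<And>m. finite {x\<in>A. f x $ m \<noteq> 0}"
  shows "(f has_sum Abs_fps (\<lambda>m. sum f {x\<in>A. f x $ m \<noteq> 0} $ m)) A"
  unfolding has_sum_def
proof (rule tendsto_fpsI)
  fix m
  show "eventually (\<lambda>Y. sum f Y $ m = Abs_fps (\<lambda>m. sum f {x\<in>A. f x $ m \<noteq> 0} $ m) $ m)
      (finite_subsets_at_top A)"
    unfolding eventually_finite_subsets_at_top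
  proof (intro exI conjI allI impI)
    fix Y assume "finite Y \<and> {x\<in>A. f x $ m \<noteq> 0} \<subseteq> Y \<and> Y \<subseteq> A"
    then show "sum f Y $ m = Abs_fps (\<lambda>m. sum f {x\<in>A. f x $ m \<noteq> 0} $ m) $ m"
      unfolding fps_sum_nth by (auto intro: sum.mono_neutral_right)
  qed (use fin in auto)
qed

lemma infsum_fps_nth:
  fixes f :: "'b \<Rightarrow> 'a::comm_ring_1 fps"
  assumes "\<And>m. finite {x\<in>A. f x $ m \<noteq> 0}"
    and "finite F" "F \<subseteq> A" "\<And>x. x \<in> A - F \<Longrightarrow> f x $ k = 0"
  shows "infsum f A $ k = sum f F $ k"
proof -
  have "infsum f A $ k = sum f {x\<in>A. f x $ k \<noteq> 0} $ k"
    using infsumI[OF has_sum_fps[OF assms(1)]] by simp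
  also have "\<dots> = sum f F $ k"
  proof -
    have "{x\<in>A. f x $ k \<noteq> 0} \<subseteq> F"
      using assms(4) by blast
    then show ?thesis
      unfolding fps_sum_nth by (intro sum.mono_neutral_left) (use assms(2,3) in auto)
  qed
  finally show ?thesis .
qed

lemma fps_prod_cutoff_stable:
  fixes g :: "nat \<Rightarrow> 'a::comm_ring_1 fps"
  assumes g: "\<And>n. n \<ge> 1 \<Longrightarrow> fps_cutoff n (g n) = fps_cutoff n 1" and "N \<le> N'"
  shows "fps_cutoff (Suc N) (\<Prod>n\<in>{1..N'}. g n) = fps_cutoff (Suc N) (\<Prod>n\<in>{1..N}. g n)"
  using assms(2)
proof (induction N' rule: dec_induct)
  case (step N')
  have "fps_cutoff (Suc N) (g (Suc N')) = fps_cutoff (Suc N) 1"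
    using fps_cutoff_eq_mono[OF g[of "Suc N'"]] step.hyps by simp
  from fps_cutoff_mult_cong[OF step.IH this] show ?case
    by (simp add: prod.nat_ivl_Suc')
qed simp

lemma fps_infprod_cutoff:
  fixes g :: "nat \<Rightarrow> 'a::comm_ring_1 fps"
  assumes g: "\<And>n. n \<ge> 1 \<Longrightarrow> fps_cutoff n (g n) = fps_cutoff n 1"
  shows "fps_cutoff (Suc N) (fps_infprod g) = fps_cutoff (Suc N) (\<Prod>n\<in>{1..N}. g n)"
proof -
  define P where "P N = (\<Prod>n\<in>{1..N}. g n)" for N
  define L where "L = Abs_fps (\<lambda>m. P m $ m)"
  have stable: "P N' $ m = P N $ m" if "m \<le> N" "N \<le> N'" for m N N'
    using fps_cutoff_eq_nth[OF fps_prod_cutoff_stable[OF g that(2)]] that(1) unfolding P_def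
    by simp
  have "P \<longlonglongrightarrow> L"
  proof (rule tendsto_fpsI)
    fix m
    have "P N $ m = L $ m" if "N \<ge> m" for N
      unfolding L_def using stable[OF order.refl that] by simp
    then show "eventually (\<lambda>N. P N $ m = L $ m) sequentially"
      unfolding eventually_sequentially by blast
  qed
  then have "fps_infprod g = L"
    unfolding fps_infprod_def P_def[symmetric] by (rule limI)
  show ?thesis
    unfolding fps_cutoff_eq_fps_cutoff_iff
  proof (intro allI impI)
    fix m assume "m < Suc N"
    then have "P m $ m = P N $ m"
      by (intro stable[symmetric]) auto
    then show "fps_infprod g $ m = (\<Prod>n\<in>{1..N}. g n) $ m"
      unfolding \<open>fps_infprod g = L\<close> L_def P_def[symmetric] by simp
  qed
qed

section \<open>Ring homomorphisms and coefficientwise maps\<close>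

definition ring_hom :: "('a::comm_ring_1 \<Rightarrow> 'b::comm_ring_1) \<Rightarrow> bool" where
  "ring_hom h \<longleftrightarrow>
     (\<forall>x y. h (x + y) = h x + h y) \<and> (\<forall>x y. h (x * y) = h x * h y) \<and> h 1 = 1"

lemma ring_hom_add: "ring_hom h \<Longrightarrow> h (x + y) = h x + h y"
  and ring_hom_mult: "ring_hom h \<Longrightarrow> h (x * y) = h x * h y"
  and ring_hom_1: "ring_hom h \<Longrightarrow> h 1 = 1"
  by (simp_all add: ring_hom_def)

lemma ring_hom_0: "ring_hom h \<Longrightarrow> h 0 = 0"
  using ring_hom_add[of h 0 0] by simp

lemma ring_hom_diff: "ring_hom h \<Longrightarrow> h (x - y) = h x - h y"
  using ring_hom_add[of h "x - y" y] by (simp add: eq_diff_eq)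

lemma ring_hom_sum: "ring_hom h \<Longrightarrow> h (sum f A) = (\<Sum>i\<in>A. h (f i))"
  by (induction A rule: infinite_finite_induct) (auto simp: ring_hom_0 ring_hom_add)

lemma ring_hom_numeral: "ring_hom h \<Longrightarrow> h (numeral n) = numeral n"
proof (induction n)
  case One
  then show ?case by (simp add: ring_hom_1)
next
  case (Bit0 n)
  then show ?case using ring_hom_add[of h "numeral n" "numeral n"] by (simp add: numeral_Bit0)
next
  case (Bit1 n)
  then show ?case
    using ring_hom_add[of h "numeral n" "numeral n"] ring_hom_add[of h "numeral n + numeral n" 1]
    by (simp add: numeral_Bit1 ring_hom_1)
qed

lemma ring_hom_poly: "ring_hom (\<lambda>p. poly p c)"
  by (simp add: ring_hom_def)

lemma ring_hom_fps_of_poly_pcompose: "ring_hom (\<lambda>p. fps_of_poly (pcompose p q))"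
  by (simp add: ring_hom_def pcompose_add pcompose_mult pcompose_1 fps_of_poly_add fps_of_poly_mult)

definition fps_map :: "('a::comm_ring_1 \<Rightarrow> 'b::comm_ring_1) \<Rightarrow> 'a fps \<Rightarrow> 'b fps" where
  "fps_map h f = Abs_fps (\<lambda>n. h (f $ n))"

lemma fps_map_nth [simp]: "fps_map h f $ n = h (f $ n)"
  by (simp add: fps_map_def)

context
  fixes h :: "'a::comm_ring_1 \<Rightarrow> 'b::comm_ring_1"
  assumes h: "ring_hom h"
begin

lemma fps_map_add: "fps_map h (f + g) = fps_map h f + fps_map h g"
  by (rule fps_ext) (simp add: h ring_hom_add)

lemma fps_map_diff: "fps_map h (f - g) = fps_map h f - fps_map h g"
  by (rule fps_ext) (simp add: h ring_hom_diff)

lemma fps_map_mult: "fps_map h (f * g) = fps_map h f * fps_map h g"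
  by (rule fps_ext) (simp add: h fps_mult_nth ring_hom_sum ring_hom_mult)

lemma fps_map_1: "fps_map h 1 = 1"
  by (rule fps_ext) (simp add: h ring_hom_1 ring_hom_0)

lemma fps_map_X: "fps_map h fps_X = fps_X"
  by (rule fps_ext) (simp add: h ring_hom_1 ring_hom_0 fps_X_def)

lemma fps_map_const: "fps_map h (fps_const c) = fps_const (h c)"
  by (rule fps_ext) (simp add: h ring_hom_0)

lemma fps_map_power: "fps_map h (f ^ n) = fps_map h f ^ n"
  by (induction n) (simp_all add: fps_map_1 fps_map_mult)

lemma fps_map_sum: "fps_map h (sum f A) = (\<Sum>i\<in>A. fps_map h (f i))"
  by (induction A rule: infinite_finite_induct) (simp_all add: fps_map_add fps_ext h ring_hom_0)

lemma fps_map_prod: "fps_map h (prod f A) = (\<Prod>i\<in>A. fps_map h (f i))"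
  by (induction A rule: infinite_finite_induct) (simp_all add: fps_map_1 fps_map_mult)

end

section \<open>Gaussian binomial coefficients in base q^2\<close>

definition qpoch2 :: "nat \<Rightarrow> 'a::comm_ring_1 fps" where
  "qpoch2 n = (\<Prod>k\<in>{1..n}. 1 - fps_X ^ (2 * k))"

lemma qpoch2_0 [simp]: "qpoch2 0 = 1"
  by (simp add: qpoch2_def)

lemma qpoch2_Suc: "qpoch2 (Suc n) = qpoch2 n * (1 - fps_X ^ (2 * Suc n))"
  by (simp add: qpoch2_def prod.nat_ivl_Suc')

lemma qpoch2_nth_0 [simp]: "qpoch2 n $ 0 = 1"
  by (induction n) (simp_all add: qpoch2_Suc)

lemma qpoch2_nonzero: "qpoch2 n \<noteq> 0"
  using qpoch2_nth_0[of n] by (metis fps_zero_nth zero_neq_one)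

fun qbinom2 :: "nat \<Rightarrow> nat \<Rightarrow> 'a::comm_ring_1 fps" where
  "qbinom2 n 0 = 1"
| "qbinom2 0 (Suc k) = 0"
| "qbinom2 (Suc n) (Suc k) = qbinom2 n k + fps_X ^ (2 * Suc k) * qbinom2 n (Suc k)"

lemma qbinom2_eq_0: "n < k \<Longrightarrow> qbinom2 n k = 0"
  by (induction n k rule: qbinom2.induct) auto

lemma qpoch2_diff:
  "k < n \<Longrightarrow> qpoch2 (n - k) = qpoch2 (n - Suc k) * (1 - fps_X ^ (2 * (n - k)))"
  by (metis Suc_diff_Suc qpoch2_Suc)

lemma qbinom2_mult_qpoch2: "k \<le> n \<Longrightarrow> qbinom2 n k * qpoch2 k * qpoch2 (n - k) = qpoch2 n"
proof (induction n arbitrary: k)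
  case (Suc n)
  show ?case
  proof (cases k)
    case (Suc j)
    with Suc.prems have j: "j \<le> n" by simp
    have "qbinom2 n j * qpoch2 (Suc j) * qpoch2 (n - j)
        = (qbinom2 n j * qpoch2 j * qpoch2 (n - j)) * (1 - fps_X ^ (2 * Suc j) :: 'a fps)"
      by (simp only: qpoch2_Suc ac_simps)
    then have A: "qbinom2 n j * qpoch2 (Suc j) * qpoch2 (n - j)
        = qpoch2 n * (1 - fps_X ^ (2 * Suc j) :: 'a fps)"
      by (simp only: Suc.IH[OF j])
    have B: "qbinom2 n (Suc j) * qpoch2 (Suc j) * qpoch2 (n - j)
        = qpoch2 n * (1 - fps_X ^ (2 * (n - j)) :: 'a fps)"
    proof (cases "j < n")
      case True
      have "qbinom2 n (Suc j) * qpoch2 (Suc j) * qpoch2 (n - Suc j) = (qpoch2 n :: 'a fps)"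
        using Suc.IH[of "Suc j"] True by simp
      then show ?thesis
        unfolding qpoch2_diff[OF True] by (simp only: mult.assoc[symmetric])
    qed (use j in \<open>simp add: qbinom2_eq_0\<close>)
    have "qbinom2 (Suc n) (Suc j) * qpoch2 (Suc j) * qpoch2 (n - j)
        = qbinom2 n j * qpoch2 (Suc j) * qpoch2 (n - j)
          + fps_X ^ (2 * Suc j) * (qbinom2 n (Suc j) * qpoch2 (Suc j) * qpoch2 (n - j) :: 'a fps)"
      by (simp add: algebra_simps)
    also have "\<dots> = qpoch2 n * (1 - fps_X ^ (2 * Suc j) * fps_X ^ (2 * (n - j)))"
      unfolding A B by (simp add: algebra_simps)
    also have "fps_X ^ (2 * Suc j) * fps_X ^ (2 * (n - j)) = (fps_X ^ (2 * Suc n) :: 'a fps)"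
      using j by (intro fps_X_power_mult_eq) simp
    finally show ?thesis
      using Suc by (simp add: qpoch2_Suc)
  qed simp
qed simp

lemma qbinom2_Suc_Suc':
  "qbinom2 (Suc n) (Suc k)
     = fps_X ^ (2 * (n - k)) * qbinom2 n k + (qbinom2 n (Suc k) :: 'a::idom fps)"
proof (cases "k \<le> n")
  case False
  then show ?thesis by (simp add: qbinom2_eq_0)
next
  case True
  have nz: "qpoch2 (Suc k) * qpoch2 (n - k) \<noteq> (0::'a fps)" by (simp add: qpoch2_nonzero)
  have L: "qbinom2 (Suc n) (Suc k) * (qpoch2 (Suc k) * qpoch2 (n - k)) = (qpoch2 (Suc n) :: 'a fps)"
    using qbinom2_mult_qpoch2[of "Suc k" "Suc n", where 'a='a] True by (simp add: ac_simps)
  have R1: "fps_X ^ (2 * (n - k)) * qbinom2 n k * (qpoch2 (Suc k) * qpoch2 (n - k))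
            = (fps_X ^ (2 * (n - k)) * (qpoch2 n * (1 - fps_X ^ (2 * Suc k))) :: 'a fps)"
    using qbinom2_mult_qpoch2[of k n, where 'a='a] True by (simp add: qpoch2_Suc ac_simps)
  have R2: "qbinom2 n (Suc k) * (qpoch2 (Suc k) * qpoch2 (n - k))
      = (qpoch2 n * (1 - fps_X ^ (2 * (n - k))) :: 'a fps)"
  proof (cases "k < n")
    case True
    have "qbinom2 n (Suc k) * qpoch2 (Suc k) * qpoch2 (n - Suc k) = (qpoch2 n :: 'a fps)"
      using qbinom2_mult_qpoch2[of "Suc k" n] True by simp
    then show ?thesis
      unfolding qpoch2_diff[OF True] by (simp only: mult.assoc[symmetric])
  qed (use True in \<open>simp add: qbinom2_eq_0\<close>)
  have "(fps_X ^ (2 * (n - k)) * qbinom2 n k + qbinom2 n (Suc k)) * (qpoch2 (Suc k) * qpoch2 (n - k))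
        = fps_X ^ (2 * (n - k)) * (qpoch2 n * (1 - fps_X ^ (2 * Suc k)))
          + (qpoch2 n * (1 - fps_X ^ (2 * (n - k))) :: 'a fps)"
    using R1 R2 by (simp add: distrib_right)
  also have "\<dots> = qpoch2 n * (1 - fps_X ^ (2 * (n - k)) * fps_X ^ (2 * Suc k))"
    by (simp add: algebra_simps)
  also have "fps_X ^ (2 * (n - k)) * fps_X ^ (2 * Suc k) = (fps_X ^ (2 * Suc n) :: 'a fps)"
    using True by (intro fps_X_power_mult_eq) simp
  finally have "(fps_X ^ (2 * (n - k)) * qbinom2 n k + qbinom2 n (Suc k)) * (qpoch2 (Suc k) * qpoch2 (n - k))
      = (qpoch2 (Suc n) :: 'a fps)"
    by (simp add: qpoch2_Suc)
  with L nz show ?thesis by (metis mult_right_cancel)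
qed

lemma qbinom2_Suc_Suc_Suc_Suc:
  "qbinom2 (Suc (Suc n)) (Suc (Suc k)) = fps_X ^ (2 * (k + 2)) * qbinom2 n (k + 2)
     + (1 + fps_X ^ (2 * (n + 1))) * qbinom2 n (k + 1)
     + fps_X ^ (2 * (n - k)) * (qbinom2 n k :: 'a::idom fps)"
proof -
  have "qbinom2 (Suc (Suc n)) (Suc (Suc k))
      = qbinom2 (Suc n) (Suc k) + fps_X ^ (2 * (k + 2)) * (qbinom2 (Suc n) (Suc (Suc k)) :: 'a fps)"
    by simp
  also have "qbinom2 (Suc n) (Suc k) = fps_X ^ (2 * (n - k)) * qbinom2 n k + (qbinom2 n (Suc k) :: 'a fps)"
    by (rule qbinom2_Suc_Suc')
  also have "qbinom2 (Suc n) (Suc (Suc k))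
      = fps_X ^ (2 * (n - Suc k)) * qbinom2 n (Suc k) + (qbinom2 n (Suc (Suc k)) :: 'a fps)"
    by (rule qbinom2_Suc_Suc')
  finally have *: "qbinom2 (Suc (Suc n)) (Suc (Suc k))
      = fps_X ^ (2 * (n - k)) * qbinom2 n k + qbinom2 n (Suc k)
        + fps_X ^ (2 * (k + 2))
          * (fps_X ^ (2 * (n - Suc k)) * qbinom2 n (Suc k) + (qbinom2 n (Suc (Suc k)) :: 'a fps))" .
  show ?thesis
  proof (cases "Suc k \<le> n")
    case True
    then have "fps_X ^ (2 * (k + 2)) * fps_X ^ (2 * (n - Suc k)) = (fps_X ^ (2 * (n + 1)) :: 'a fps)"
      by (intro fps_X_power_mult_eq) simp
    then have "fps_X ^ (2 * (k + 2)) * (fps_X ^ (2 * (n - Suc k)) * qbinom2 n (Suc k))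
        = fps_X ^ (2 * (n + 1)) * (qbinom2 n (Suc k) :: 'a fps)"
      by (simp only: mult.assoc[symmetric])
    then show ?thesis unfolding * by (simp add: algebra_simps)
  qed (simp add: * qbinom2_eq_0 algebra_simps)
qed

lemma qbinom2_Suc_Suc_1:
  "qbinom2 (Suc (Suc n)) (Suc 0)
     = fps_X ^ 2 * qbinom2 n 1 + (1 + fps_X ^ (2 * (n + 1))) * (qbinom2 n 0 :: 'a::idom fps)"
proof -
  have "qbinom2 (Suc (Suc n)) (Suc 0) = 1 + fps_X ^ 2 * (qbinom2 (Suc n) (Suc 0) :: 'a fps)"
    by simp
  also have "qbinom2 (Suc n) (Suc 0)
      = fps_X ^ (2 * (n - 0)) * qbinom2 n 0 + (qbinom2 n (Suc 0) :: 'a fps)"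
    by (rule qbinom2_Suc_Suc')
  finally show ?thesis by (simp add: algebra_simps flip: power_add)
qed

lemma qpoch2_cutoff:
  assumes "j \<le> n"
  shows "fps_cutoff (2 * j + 2) (qpoch2 n) = fps_cutoff (2 * j + 2) (qpoch2 j)"
  using assms
proof (induction n rule: dec_induct)
  case (step n)
  have "fps_cutoff (2 * j + 2) (1 - fps_X ^ (2 * Suc n)) = fps_cutoff (2 * j + 2) (1 :: 'a fps)"
    using step.hyps by (auto simp: fps_cutoff_eq_fps_cutoff_iff)
  from fps_cutoff_mult_cong[OF step.IH this] show ?case by (simp add: qpoch2_Suc)
qed simp

lemma qbinom2_mult_qpoch2_cutoff:
  assumes "k \<le> n" "min k (n - k) \<le> N"
  shows "fps_cutoff (2 * min k (n - k) + 2) (qbinom2 n k * qpoch2 N)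
       = fps_cutoff (2 * min k (n - k) + 2) (1 :: 'a::field fps)"
proof -
  define j where "j = min k (n - k)"
  define M where "M = 2 * j + 2"
  have j: "j \<le> k" "j \<le> n - k" "j \<le> n" "j \<le> N"
    using assms by (auto simp: j_def)
  have "fps_cutoff M (1 * qpoch2 j) = fps_cutoff M (qpoch2 n :: 'a fps)"
    unfolding M_def mult_1_left by (rule qpoch2_cutoff[OF j(3), symmetric])
  also have "\<dots> = fps_cutoff M (qbinom2 n k * qpoch2 k * qpoch2 (n - k))"
    by (simp add: qbinom2_mult_qpoch2 assms(1))
  also have "\<dots> = fps_cutoff M (qbinom2 n k * qpoch2 j * qpoch2 j)"
    unfolding M_def by (intro fps_cutoff_mult_cong refl qpoch2_cutoff j)
  finally have "fps_cutoff M (qbinom2 n k * qpoch2 j) = fps_cutoff M (1 :: 'a fps)"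
    by (rule fps_cutoff_cancel_unit[OF sym, of _ _ _ _ "inverse (qpoch2 j)"])
      (simp add: inverse_mult_eq_1')
  moreover have "fps_cutoff M (qbinom2 n k * qpoch2 N) = fps_cutoff M (qbinom2 n k * qpoch2 j :: 'a fps)"
    unfolding M_def by (intro fps_cutoff_mult_cong refl qpoch2_cutoff j)
  ultimately show ?thesis by (simp add: M_def j_def)
qed

section \<open>The finite triple product\<close>

text \<open>As a polynomial in z this is z^N prod_(k=1..N) (1 + z q^(2k-1)) (1 + z^-1 q^(2k-1)),
  because (a + z)(1 + a z) = a + (1 + a^2) z + a z^2.\<close>

definition jacobi_poly :: "nat \<Rightarrow> 'a::comm_ring_1 fps poly" where
  "jacobi_poly N =
     (\<Prod>k\<in>{1..N}. [:fps_X ^ (2 * k - 1), 1 + fps_X ^ (2 * (2 * k - 1)), fps_X ^ (2 * k - 1):])"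

definition sqdist :: "nat \<Rightarrow> nat \<Rightarrow> nat" where
  "sqdist N i = nat ((int i - int N)^2)"

lemma sqdist_eq_iff:
  "a + sqdist N i = b + sqdist N' i' \<longleftrightarrow>
     int a + (int i - int N)^2 = int b + (int i' - int N')^2"
proof -
  have "a + sqdist N i = b + sqdist N' i' \<longleftrightarrow> int (a + sqdist N i) = int (b + sqdist N' i')"
    by linarith
  also have "\<dots> \<longleftrightarrow> int a + (int i - int N)^2 = int b + (int i' - int N')^2"
    by (simp add: sqdist_def)
  finally show ?thesis .
qed

lemma coeff_mult_3:
  fixes p :: "'a::comm_ring_1 poly"
  shows "coeff (p * [:a, b, c:]) i = a * coeff p i + (if i \<ge> 1 then b * coeff p (i - 1) else 0)
          + (if i \<ge> 2 then c * coeff p (i - 2) else 0)"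
proof -
  have "p * [:a, b, c:] = smult a p + pCons 0 (smult b p + pCons 0 (smult c p))"
    by simp
  then show ?thesis
    by (cases i; cases "i - 1") (auto simp: coeff_pCons' mult.commute)
qed

lemma sqdist_Suc_Suc: "sqdist (Suc N) (Suc i) = sqdist N i"
  by (simp add: sqdist_def)

lemma sqdist_shift:
  "2 * N + 1 + sqdist N i = 2 * i + sqdist (Suc N) i"
  "i \<le> 2 * N \<Longrightarrow> 2 * N + 1 + sqdist N i = 2 * (2 * N - i) + sqdist (Suc N) (i + 2)"
  by (subst sqdist_eq_iff; simp add: algebra_simps power2_eq_square of_nat_diff)+

lemma coeff_jacobi_poly_Suc:
  "coeff (jacobi_poly (Suc N)) i = fps_X ^ (2 * N + 1) * coeff (jacobi_poly N) i
     + (if i \<ge> 1 then (1 + fps_X ^ (2 * (2 * N + 1))) * coeff (jacobi_poly N) (i - 1) else 0)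
     + (if i \<ge> 2 then fps_X ^ (2 * N + 1) * coeff (jacobi_poly N) (i - 2)
        else (0 :: 'a::comm_ring_1 fps))"
proof -
  have "jacobi_poly (Suc N)
      = (jacobi_poly N * [:fps_X ^ (2 * N + 1), 1 + fps_X ^ (2 * (2 * N + 1)), fps_X ^ (2 * N + 1):]
          :: 'a fps poly)"
    by (simp add: jacobi_poly_def prod.nat_ivl_Suc')
  then show ?thesis
    by (simp only: coeff_mult_3)
qed

lemma qbinom2_X_sqdist_Suc_Suc:
  "qbinom2 (2 * Suc N) (k + 2) * fps_X ^ sqdist (Suc N) (k + 2)
     = fps_X ^ (2 * N + 1) * (qbinom2 (2 * N) (k + 2) * fps_X ^ sqdist N (k + 2))
       + (1 + fps_X ^ (2 * (2 * N + 1))) * (qbinom2 (2 * N) (k + 1) * fps_X ^ sqdist N (k + 1))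
       + fps_X ^ (2 * N + 1) * (qbinom2 (2 * N) k * fps_X ^ sqdist N k :: 'a::idom fps)"
proof -
  let ?a = "fps_X ^ (2 * N + 1) :: 'a fps" and ?b = "1 + fps_X ^ (2 * (2 * N + 1)) :: 'a fps"
  let ?G = "qbinom2 (2 * N) :: nat \<Rightarrow> 'a fps"
  have t1: "?a * (?G (k + 2) * fps_X ^ sqdist N (k + 2))
      = fps_X ^ (2 * (k + 2)) * ?G (k + 2) * fps_X ^ sqdist (Suc N) (k + 2)"
    by (rule fps_X_power_mult_swap[OF sqdist_shift(1)])
  have t3: "?a * (?G k * fps_X ^ sqdist N k)
      = fps_X ^ (2 * (2 * N - k)) * ?G k * fps_X ^ sqdist (Suc N) (k + 2)"
  proof (cases "k \<le> 2 * N")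
    case True
    then show ?thesis by (rule fps_X_power_mult_swap[OF sqdist_shift(2)])
  qed (simp add: qbinom2_eq_0)
  have e2: "sqdist N (k + 1) = sqdist (Suc N) (k + 2)"
    using sqdist_Suc_Suc[of N "k + 1"] by simp
  have "qbinom2 (2 * Suc N) (k + 2)
      = fps_X ^ (2 * (k + 2)) * ?G (k + 2) + ?b * ?G (k + 1) + fps_X ^ (2 * (2 * N - k)) * ?G k"
    using qbinom2_Suc_Suc_Suc_Suc[of "2 * N" k, where 'a='a] by (simp add: algebra_simps)
  then show ?thesis
    by (simp only: t1 t3 e2 distrib_right mult.assoc)
qed

lemma coeff_jacobi_poly:
  "coeff (jacobi_poly N) i = (qbinom2 (2 * N) i * fps_X ^ sqdist N i :: 'a::idom fps)"
proof (induction N arbitrary: i)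
  case 0
  then show ?case by (cases i) (auto simp: jacobi_poly_def sqdist_def coeff_1)
next
  case (Suc N)
  let ?a = "fps_X ^ (2 * N + 1) :: 'a fps" and ?b = "1 + fps_X ^ (2 * (2 * N + 1)) :: 'a fps"
  let ?G = "qbinom2 (2 * N) :: nat \<Rightarrow> 'a fps"
  have swap: "?a * (?G j * fps_X ^ sqdist N j) = fps_X ^ (2 * j) * ?G j * fps_X ^ sqdist (Suc N) j"
    for j
    by (rule fps_X_power_mult_swap[OF sqdist_shift(1)])
  consider "i = 0" | "i = 1" | k where "i = k + 2"
    by (metis One_nat_def add_2_eq_Suc' not0_implies_Suc)
  then show ?case
  proof cases
    case 1
    then show ?thesis
      using swap[of 0] by (simp add: coeff_jacobi_poly_Suc Suc.IH)
  next
    case 2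
    have "coeff (jacobi_poly (Suc N)) 1
        = ?a * (?G 1 * fps_X ^ sqdist N 1) + ?b * (?G 0 * fps_X ^ sqdist N 0)"
      by (simp add: coeff_jacobi_poly_Suc Suc.IH)
    also have "\<dots> = (fps_X ^ 2 * ?G 1 + ?b * ?G 0) * fps_X ^ sqdist (Suc N) 1"
    proof -
      have e1: "2 * N + 1 + sqdist N 1 = 2 + sqdist (Suc N) 1"
        using sqdist_shift(1)[of N 1] by simp
      have e2: "sqdist N 0 = sqdist (Suc N) 1"
        using sqdist_Suc_Suc[of N 0] by simp
      show ?thesis
        by (simp only: fps_X_power_mult_swap[OF e1] e2 distrib_right mult.assoc)
    qed
    also have "fps_X ^ 2 * ?G 1 + ?b * ?G 0 = qbinom2 (2 * Suc N) 1"
      using qbinom2_Suc_Suc_1[of "2 * N", where 'a='a] by (simp add: numeral_2_eq_2)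
    finally show ?thesis using 2 by simp
  next
    case (3 k)
    have "coeff (jacobi_poly (Suc N)) i
        = ?a * (?G (k + 2) * fps_X ^ sqdist N (k + 2)) + ?b * (?G (k + 1) * fps_X ^ sqdist N (k + 1))
          + ?a * (?G k * fps_X ^ sqdist N k)"
      by (simp add: coeff_jacobi_poly_Suc Suc.IH 3)
    also have "\<dots> = qbinom2 (2 * Suc N) (k + 2) * fps_X ^ sqdist (Suc N) (k + 2)"
      by (rule qbinom2_X_sqdist_Suc_Suc[symmetric])
    finally show ?thesis using 3 by simp
  qed
qed

lemma degree_jacobi_poly: "degree (jacobi_poly N :: 'a::idom fps poly) \<le> 2 * N"
  by (rule degree_le) (auto simp: coeff_jacobi_poly qbinom2_eq_0)

lemma sqdist_bound:
  assumes "i \<le> 2 * N" "m \<le> N"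
  shows "m - sqdist N i < 2 * min i (2 * N - i) + 2"
proof -
  define s where "s = (if i \<le> N then N - i else i - N)"
  have "int s = \<bar>int i - int N\<bar>"
    by (simp add: s_def)
  then have "sqdist N i = s^2"
    by (simp add: sqdist_def nat_eq_iff)
  moreover have "min i (2 * N - i) = N - s" "s \<le> N"
    using assms by (auto simp: s_def)
  moreover have "int (2 * s) \<le> int (s^2 + 1)"
    using zero_le_power2[of "int s - 1"] by (simp add: power2_eq_square algebra_simps)
  then have "2 * s \<le> s^2 + 1"
    by (simp only: of_nat_le_iff)
  ultimately show ?thesis using assms by linarith
qed

lemma fps_cutoff_qbinom2_qpoch2_X_power:
  assumes "i \<le> 2 * N"
  shows "fps_cutoff (Suc N) (qbinom2 (2 * N) i * qpoch2 N * fps_X ^ sqdist N i)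
       = fps_cutoff (Suc N) (fps_X ^ sqdist N i :: 'a::field fps)"
proof (unfold fps_cutoff_eq_fps_cutoff_iff, intro allI impI)
  fix m assume "m < Suc N"
  then have m: "m \<le> N" by simp
  show "(qbinom2 (2 * N) i * qpoch2 N * fps_X ^ sqdist N i) $ m
      = (fps_X ^ sqdist N i :: 'a fps) $ m"
  proof (cases "m < sqdist N i")
    case False
    have "fps_cutoff (2 * min i (2 * N - i) + 2) (qbinom2 (2 * N) i * qpoch2 N)
        = fps_cutoff (2 * min i (2 * N - i) + 2) (1 :: 'a fps)"
      by (rule qbinom2_mult_qpoch2_cutoff) (use assms in auto)
    then have "(qbinom2 (2 * N) i * qpoch2 N) $ (m - sqdist N i) = (1 :: 'a fps) $ (m - sqdist N i)"
      using sqdist_bound[OF assms m] by (rule fps_cutoff_eq_nth)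
    then show ?thesis using False by (simp add: fps_X_power_mult_right_nth)
  qed (simp add: fps_X_power_mult_right_nth)
qed

section \<open>The truncated triple product identity\<close>

fun lucasV :: "nat \<Rightarrow> 'a::comm_ring_1 \<Rightarrow> 'a" where
  "lucasV 0 c = 2"
| "lucasV (Suc 0) c = c"
| "lucasV (Suc (Suc n)) c = c * lucasV (Suc n) c - lucasV n c"

lemma lucasV_add_inverse:
  fixes z :: "'a::field"
  assumes "z \<noteq> 0"
  shows "lucasV n (z + inverse z) = z ^ n + inverse z ^ n"
proof (induction n "z + inverse z" rule: lucasV.induct)
  case (3 n)
  have "lucasV (Suc (Suc n)) (z + inverse z)
      = (z + inverse z) * (z ^ Suc n + inverse z ^ Suc n) - (z ^ n + inverse z ^ n)"
    using 3 by simp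
  also have "\<dots> = z ^ Suc (Suc n) + inverse z ^ Suc (Suc n)
      + (z * inverse z - 1) * (z ^ n + inverse z ^ n)"
    by (simp add: algebra_simps)
  also have "\<dots> = z ^ Suc (Suc n) + inverse z ^ Suc (Suc n)"
    using assms by simp
  finally show ?case .
qed simp_all

lemma ring_hom_lucasV: "ring_hom h \<Longrightarrow> h (lucasV n c) = lucasV n (h c)"
  by (induction n c rule: lucasV.induct)
    (simp_all add: ring_hom_numeral ring_hom_diff ring_hom_mult)

definition jacobi_prod :: "nat \<Rightarrow> 'a::comm_ring_1 \<Rightarrow> 'a fps" where
  "jacobi_prod N c =
     (\<Prod>k\<in>{1..N}. 1 + fps_const c * fps_X ^ (2 * k - 1) + fps_X ^ (2 * (2 * k - 1))) * qpoch2 N"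

definition jacobi_sum :: "nat \<Rightarrow> 'a::comm_ring_1 \<Rightarrow> 'a fps" where
  "jacobi_sum N c = 1 + (\<Sum>n\<in>{1..N}. fps_const (lucasV n c) * fps_X ^ n\<^sup>2)"

lemma fps_map_jacobi_prod:
  assumes "ring_hom h"
  shows "fps_map h (jacobi_prod N c) = jacobi_prod N (h c)"
  using assms
  by (simp add: jacobi_prod_def qpoch2_def fps_map_mult fps_map_prod fps_map_add fps_map_diff
      fps_map_1 fps_map_power fps_map_X fps_map_const)

lemma fps_map_jacobi_sum:
  assumes "ring_hom h"
  shows "fps_map h (jacobi_sum N c) = jacobi_sum N (h c)"
  using assms
  by (simp add: jacobi_sum_def fps_map_mult fps_map_sum fps_map_add fps_map_1 fps_map_power
      fps_map_X fps_map_const ring_hom_lucasV)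

lemma poly_jacobi_poly_fps_const:
  fixes z :: "'a::field"
  assumes "z \<noteq> 0"
  shows "poly (jacobi_poly N) (fps_const z) = fps_const (z ^ N) *
    (\<Prod>k\<in>{1..N}. 1 + fps_const (z + inverse z) * fps_X ^ (2 * k - 1) + fps_X ^ (2 * (2 * k - 1)))"
proof -
  let ?w = "fps_const z :: 'a fps"
  have "z * (z + inverse z) = z * z + 1"
    using assms by (simp add: distrib_left)
  then have w: "?w * fps_const (z + inverse z) = ?w * ?w + 1"
    by (metis fps_const_add fps_const_mult fps_const_1_eq_1)
  have fac: "poly [:fps_X ^ (2 * k - 1), 1 + fps_X ^ (2 * (2 * k - 1)), fps_X ^ (2 * k - 1):] ?w
      = ?w * (1 + fps_const (z + inverse z) * fps_X ^ (2 * k - 1) + fps_X ^ (2 * (2 * k - 1)))" for k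
  proof -
    define a where "a = (fps_X ^ (2 * k - 1) :: 'a fps)"
    have aa: "fps_X ^ (2 * (2 * k - 1)) = a * a"
      unfolding a_def by (simp only: mult_2 power_add)
    have "poly [:a, 1 + a * a, a:] ?w = ?w + ?w * (a * a) + (?w * ?w + 1) * a"
      by (simp add: algebra_simps)
    also have "\<dots> = ?w * (1 + fps_const (z + inverse z) * a + a * a)"
      unfolding w[symmetric] by (simp add: algebra_simps)
    finally show ?thesis unfolding aa a_def .
  qed
  have "(\<Prod>k\<in>{1..N}. ?w) = fps_const (z ^ N)"
    by (simp add: fps_const_power)
  then show ?thesis
    unfolding jacobi_poly_def poly_prod fac prod.distrib by simp
qed

lemma poly_altdef_le:
  fixes p :: "'a::comm_semiring_1 poly"
  assumes "degree p \<le> n"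
  shows "poly p x = (\<Sum>i\<le>n. coeff p i * x ^ i)"
  unfolding poly_altdef by (rule sum.mono_neutral_left) (use assms in \<open>auto simp: coeff_eq_0\<close>)

lemma jacobi_prod_scaled_cutoff:
  fixes z :: "'a::field"
  assumes "z \<noteq> 0"
  shows "fps_cutoff (Suc N) (fps_const (z ^ N) * jacobi_prod N (z + inverse z))
       = fps_cutoff (Suc N) (\<Sum>i\<le>2 * N. fps_const (z ^ i) * fps_X ^ sqdist N i)"
proof -
  have "fps_const (z ^ N) * jacobi_prod N (z + inverse z)
      = poly (jacobi_poly N) (fps_const z) * qpoch2 N"
    by (simp add: jacobi_prod_def poly_jacobi_poly_fps_const assms mult.assoc)
  also have "\<dots>
      = (\<Sum>i\<le>2 * N. fps_const (z ^ i) * (qbinom2 (2 * N) i * qpoch2 N * fps_X ^ sqdist N i))"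
    by (simp add: poly_altdef_le[OF degree_jacobi_poly] coeff_jacobi_poly sum_distrib_left
        sum_distrib_right fps_const_power ac_simps)
  finally have eq: "fps_const (z ^ N) * jacobi_prod N (z + inverse z) = \<dots>" .
  show ?thesis
    unfolding eq fps_cutoff_eq_fps_cutoff_iff fps_sum_nth fps_mult_left_const_nth
  proof (intro allI impI sum.cong refl)
    fix m i assume "m < Suc N" "i \<in> {..2 * N}"
    then have "(qbinom2 (2 * N) i * qpoch2 N * fps_X ^ sqdist N i) $ m
        = (fps_X ^ sqdist N i :: 'a fps) $ m"
      by (intro fps_cutoff_eq_nth[OF fps_cutoff_qbinom2_qpoch2_X_power]) auto
    then show "z ^ i * (qbinom2 (2 * N) i * qpoch2 N * fps_X ^ sqdist N i) $ m
        = z ^ i * fps_X ^ sqdist N i $ m"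
      by (simp only:)
  qed
qed

lemma sum_atMost_mult_2_split:
  fixes h :: "nat \<Rightarrow> 'a::comm_monoid_add"
  shows   "(\<Sum>i\<le>2 * N. h i) = h N + (\<Sum>n\<in>{1..N}. h (N + n)) + (\<Sum>n\<in>{1..N}. h (N - n))"
proof -
  have "{..2 * N} = {..<N} \<union> ({N} \<union> {N<..2 * N})" by auto
  then have "(\<Sum>i\<le>2 * N. h i) = (\<Sum>i<N. h i) + (h N + (\<Sum>i\<in>{N<..2 * N}. h i))"
    by (simp only:) (subst sum.union_disjoint; auto)+
  moreover have "(\<Sum>n\<in>{1..N}. h (N + n)) = (\<Sum>i\<in>{N<..2 * N}. h i)"
    by (rule sum.reindex_bij_witness[of _ "\<lambda>i. i - N" "\<lambda>n. N + n"]) auto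
  moreover have "(\<Sum>n\<in>{1..N}. h (N - n)) = (\<Sum>i<N. h i)"
    by (rule sum.reindex_bij_witness[of _ "\<lambda>i. N - i" "\<lambda>n. N - n"]) auto
  ultimately show ?thesis by (simp add: ac_simps)
qed

lemma jacobi_sum_scaled:
  fixes z :: "'a::field"
  assumes "z \<noteq> 0"
  shows "fps_const (z ^ N) * jacobi_sum N (z + inverse z)
       = (\<Sum>i\<le>2 * N. fps_const (z ^ i) * fps_X ^ sqdist N i)"
proof -
  have lucas: "z ^ N * lucasV n (z + inverse z) = z ^ (N + n) + z ^ (N - n)"
    if "n \<in> {1..N}" for n
  proof -
    have "z ^ N * inverse z ^ n = z ^ (N - n)"
      using that assms by (simp add: power_diff power_inverse divide_inverse)
    then show ?thesis using assms by (simp add: lucasV_add_inverse power_add distrib_left)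
  qed
  have "fps_const (z ^ N) * (fps_const (lucasV n (z + inverse z)) * fps_X ^ n\<^sup>2)
      = fps_const (z ^ (N + n)) * fps_X ^ n\<^sup>2 + fps_const (z ^ (N - n)) * fps_X ^ n\<^sup>2"
    if "n \<in> {1..N}" for n
    by (simp only: mult.assoc[symmetric] fps_const_mult lucas[OF that] fps_const_add[symmetric]
        distrib_right)
  then have "(\<Sum>n\<in>{1..N}. fps_const (z ^ N) * (fps_const (lucasV n (z + inverse z)) * fps_X ^ n\<^sup>2))
      = (\<Sum>n\<in>{1..N}. fps_const (z ^ (N + n)) * fps_X ^ n\<^sup>2
          + fps_const (z ^ (N - n)) * fps_X ^ n\<^sup>2)"
    by (rule sum.cong[OF refl])
  then have "fps_const (z ^ N) * jacobi_sum N (z + inverse z)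
      = fps_const (z ^ N) + (\<Sum>n\<in>{1..N}. fps_const (z ^ (N + n)) * fps_X ^ n\<^sup>2
          + fps_const (z ^ (N - n)) * fps_X ^ n\<^sup>2)"
    unfolding jacobi_sum_def distrib_left sum_distrib_left mult_1_right by (simp only:)
  also have "\<dots> = (\<Sum>i\<le>2 * N. fps_const (z ^ i) * fps_X ^ sqdist N i)"
    unfolding sum_atMost_mult_2_split sum.distrib
    by (simp add: sqdist_def nat_power_eq of_nat_diff power2_commute add.assoc)
  finally show ?thesis .
qed

lemma jacobi_prod_cutoff_add_inverse:
  fixes z :: "'a::field"
  assumes "z \<noteq> 0"
  shows "fps_cutoff (Suc N) (jacobi_prod N (z + inverse z))
       = fps_cutoff (Suc N) (jacobi_sum N (z + inverse z))"
proof (rule fps_cutoff_cancel_unit)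
  show "fps_cutoff (Suc N) (jacobi_prod N (z + inverse z) * fps_const (z ^ N))
      = fps_cutoff (Suc N) (jacobi_sum N (z + inverse z) * fps_const (z ^ N))"
    using jacobi_prod_scaled_cutoff[OF assms] jacobi_sum_scaled[OF assms]
    by (simp add: mult.commute)
  show "fps_const (z ^ N) * fps_const (inverse z ^ N) = 1"
    using assms by (simp flip: fps_const_mult power_mult_distrib)
qed

lemma infinite_image_add_inverse: "infinite ((\<lambda>z::real. z + inverse z) ` {1<..})"
proof -
  have "inj_on (\<lambda>z::real. z + inverse z) {1<..}"
  proof (rule inj_onI)
    fix z w :: real
    assume "z \<in> {1<..}" "w \<in> {1<..}" and eq: "z + inverse z = w + inverse w"
    then have "z > 1" "w > 1" by auto
    have "(z + inverse z) * (z * w) = z * z * w + w" "(w + inverse w) * (z * w) = w * w * z + z"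
      using \<open>z > 1\<close> \<open>w > 1\<close> by (simp_all add: field_simps)
    with eq have "(z - w) * (z * w - 1) = 0"
      by (simp add: algebra_simps)
    moreover have "z * w > 1"
      using \<open>z > 1\<close> \<open>w > 1\<close> by (simp add: less_1_mult)
    ultimately show "z = w" by simp
  qed
  then show ?thesis
    using finite_imageD infinite_Ioi by blast
qed

lemma jacobi_prod_cutoff:
  fixes h :: "real poly \<Rightarrow> 'b::comm_ring_1"
  assumes h: "ring_hom h"
  shows "fps_cutoff (Suc N) (jacobi_prod N (h [:0, 1:]))
       = fps_cutoff (Suc N) (jacobi_sum N (h [:0, 1:]))"
proof (unfold fps_cutoff_eq_fps_cutoff_iff, intro allI impI)
  fix m assume m: "m < Suc N"
  define D where "D = jacobi_prod N [:0, 1:] $ m - jacobi_sum N ([:0, 1:] :: real poly) $ m"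
  have eval: "poly (F $ m) c = fps_map (\<lambda>p. poly p c) F $ m" for F :: "real poly fps" and c
    by simp
  have poly_D: "poly D c = jacobi_prod N c $ m - jacobi_sum N c $ m" for c :: real
    unfolding D_def poly_diff eval
    by (simp add: fps_map_jacobi_prod fps_map_jacobi_sum ring_hom_poly)
  have "poly D (z + inverse z) = 0" if "z > 1" for z :: real
    using fps_cutoff_eq_nth[OF jacobi_prod_cutoff_add_inverse m, of z] that by (simp add: poly_D)
  then have "(\<lambda>z::real. z + inverse z) ` {1<..} \<subseteq> {c. poly D c = 0}"
    by auto
  then have "infinite {c. poly D c = 0}"
    using infinite_image_add_inverse finite_subset by blast
  then have "D = 0"
    using poly_roots_finite by blast
  then have "h (jacobi_prod N [:0, 1:] $ m) = h (jacobi_sum N [:0, 1:] $ m)"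
    by (simp add: D_def)
  then show "jacobi_prod N (h [:0, 1:]) $ m = jacobi_sum N (h [:0, 1:]) $ m"
    by (simp flip: fps_map_jacobi_prod[OF h] fps_map_jacobi_sum[OF h])
qed

section \<open>Chebyshev polynomials\<close>

fun cheb_even :: "nat \<Rightarrow> real poly" where
  "cheb_even 0 = 1"
| "cheb_even (Suc 0) = [:-1, 2:]"
| "cheb_even (Suc (Suc n)) = [:-2, 4:] * cheb_even (Suc n) - cheb_even n"

lemma cheb_Suc_Suc_Suc_Suc:
  "cheb (Suc (Suc (Suc (Suc m)))) = [:-2, 0, 4:] * cheb (Suc (Suc m)) - cheb m"
proof -
  let ?Y = "smult 2 [:0, 1:] :: real poly"
  have "cheb (Suc (Suc (Suc (Suc m))))
      = (?Y * ?Y) * cheb (Suc (Suc m)) - ?Y * cheb (Suc m) - cheb (Suc (Suc m))"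
    by (simp only: cheb.simps(3)[of "Suc (Suc m)"] cheb.simps(3)[of "Suc m"]) (simp add: algebra_simps)
  also have "?Y * cheb (Suc m) = cheb (Suc (Suc m)) + cheb m"
    by simp
  also have "?Y * ?Y = [:-2, 0, 4:] + 2"
    by (simp add: numeral_poly)
  finally show ?thesis
    by (simp add: algebra_simps)
qed

lemma pcompose_cheb_even: "pcompose (cheb_even n) [:0, 0, 1:] = cheb (2 * n)"
proof (induction n rule: cheb_even.induct)
  case (3 n)
  have "pcompose [:-2, 4:] [:0, 0, 1:] = ([:-2, 0, 4:] :: real poly)"
    by (simp add: pcompose_pCons)
  then have "pcompose (cheb_even (Suc (Suc n))) [:0, 0, 1:]
      = [:-2, 0, 4:] * pcompose (cheb_even (Suc n)) [:0, 0, 1:] - pcompose (cheb_even n) [:0, 0, 1:]"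
    by (simp only: cheb_even.simps pcompose_diff pcompose_mult)
  also have "\<dots> = cheb (2 * Suc (Suc n))"
    using cheb_Suc_Suc_Suc_Suc[of "2 * n"] 3 by (simp add: numeral_2_eq_2)
  finally show ?case .
qed (simp_all add: pcompose_1 pcompose_pCons numeral_2_eq_2 one_pCons)

lemma coeff_pcompose_X2:
  "coeff (pcompose p [:0, 0, 1:]) j = (if even j then coeff p (j div 2) else (0 :: 'a::comm_ring_1))"
proof (induction p arbitrary: j)
  case (pCons a p)
  have "pcompose (pCons a p) [:0, 0, 1:] = pCons a (pCons 0 (pcompose p [:0, 0, 1:]))"
    by (simp add: pcompose_pCons)
  then show ?case
    using pCons.IH by (cases j; cases "j - 1") (auto simp: coeff_pCons')
qed simp

lemma degree_cheb_even: "degree (cheb_even n) \<le> n"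
proof (induction n rule: cheb_even.induct)
  case (3 n)
  have "degree ([:-2, 4:] * cheb_even (Suc n)) \<le> Suc (Suc n)"
    using degree_mult_le[of "[:-2, 4:]" "cheb_even (Suc n)"] 3 by simp
  moreover have "degree (cheb_even n) \<le> Suc (Suc n)"
    using 3 by simp
  ultimately show ?case
    by (simp add: degree_diff_le)
qed simp_all

lemma te_eq_cheb_even: "te n = cheb_even n"
proof (rule poly_eqI)
  fix k
  show "coeff (te n) k = coeff (cheb_even n) k"
  proof (cases "k \<le> n")
    case True
    then have "coeff (te n) k = coeff (cheb (2 * n)) (2 * k)"
      unfolding te_def coeff_Poly_eq by (simp add: nth_default_def del: upt_Suc)
    also have "\<dots> = coeff (cheb_even n) k"
      unfolding pcompose_cheb_even[symmetric] coeff_pcompose_X2 by simp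
    finally show ?thesis .
  next
    case False
    then show ?thesis
      unfolding te_def coeff_Poly_eq using degree_cheb_even[of n]
      by (simp add: nth_default_def coeff_eq_0 del: upt_Suc)
  qed
qed

lemma smult_2_cheb_even: "smult 2 (cheb_even n) = lucasV n [:-2, 4:]"
proof (induction n rule: cheb_even.induct)
  case (3 n)
  have "smult 2 (cheb_even (Suc (Suc n)))
      = [:-2, 4:] * smult 2 (cheb_even (Suc n)) - smult 2 (cheb_even n)"
    by (simp add: smult_diff_right mult_smult_right)
  then show ?case using 3 by simp
qed (simp_all add: numeral_poly)

lemma poly_map_fps_const_fps_const:
  "poly (map_poly (\<lambda>c. fps_const (fps_const c)) p) (fps_const w)
     = fps_const (poly (map_poly fps_const p) (w :: 'a::comm_ring_1 fps))"
  by (induction p) (simp_all add: map_poly_pCons)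

lemma poly_map_fps_const_fps_of_poly:
  "poly (map_poly fps_const p) (fps_of_poly q) = fps_of_poly (pcompose p (q :: 'a::comm_ring_1 poly))"
  by (induction p) (simp_all add: map_poly_pCons pcompose_pCons fps_of_poly_add fps_of_poly_mult
      fps_of_poly_const)

text \<open>With c = 2 cos 2t the argument (c + 2)/4 is cos^2 t and T_2n(cos t) = cos 2nt,
  whence 2 te_n((c + 2)/4) = V_n(c).\<close>

lemma two_te_eval:
  "2 * poly (map_poly (\<lambda>c. fps_const (fps_const c)) (te n))
       ((fps_const fps_X + of_int a + 2) * fps_const (fps_const (1 / 4)))
     = fps_const (lucasV n (fps_X + of_int a :: real fps))"
proof -
  define Q :: "real poly" where "Q = [:(of_int a + 2) / 4, 1 / 4:]"
  let ?H = "\<lambda>p. fps_of_poly (pcompose p Q)"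
  have "fps_of_poly Q = (fps_X + of_int a + 2) * fps_const (1 / 4)"
    by (rule fps_ext) (auto simp: Q_def coeff_pCons' fps_of_int[symmetric] numeral_fps_const)
  then have Q: "(fps_const fps_X + of_int a + 2) * fps_const (fps_const (1 / 4))
      = (fps_const (fps_of_poly Q) :: real fps fps)"
    by (simp add: fps_of_int[symmetric] numeral_fps_const)
  have "2 * poly (map_poly (\<lambda>c. fps_const (fps_const c)) (te n)) (fps_const (fps_of_poly Q))
      = fps_const (2 * ?H (cheb_even n))"
    unfolding poly_map_fps_const_fps_const poly_map_fps_const_fps_of_poly te_eq_cheb_even
    by (simp add: numeral_fps_const)
  also have "2 * ?H (cheb_even n) = ?H (lucasV n [:-2, 4:])"
    by (simp add: fps_of_poly_smult numeral_fps_const pcompose_smult flip: smult_2_cheb_even)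
  also have "\<dots> = lucasV n (?H [:-2, 4:])"
    by (rule ring_hom_lucasV[OF ring_hom_fps_of_poly_pcompose])
  also have "?H [:-2, 4:] = fps_X + of_int a"
    by (simp add: Q_def pcompose_pCons field_simps fps_of_poly_linear fps_of_int)
  finally show ?thesis unfolding Q .
qed

section \<open>The generating function of U~_t\<close>

lemma prod_one_plus_mult_expand:
  fixes f :: "'b \<Rightarrow> 'a::comm_semiring_1"
  assumes "finite A" "card A \<le> K"
  shows "(\<Prod>n\<in>A. 1 + y * f n)
       = (\<Sum>t\<le>K. y ^ t * (\<Sum>S | S \<subseteq> A \<and> card S = t. \<Prod>n\<in>S. f n))"
proof -
  have "(\<Prod>n\<in>A. 1 + y * f n) = (\<Sum>S\<in>Pow A. (\<Prod>n\<in>S. y * f n) * (\<Prod>n\<in>A - S. 1))"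
    using prod_add[OF assms(1), of "\<lambda>n. y * f n" "\<lambda>_. 1"] by (simp add: add.commute)
  also have "\<dots> = (\<Sum>S\<in>Pow A. y ^ card S * (\<Prod>n\<in>S. f n))"
    by (simp add: prod.distrib)
  also have "\<dots> = (\<Sum>t\<le>K. \<Sum>S\<in>{S\<in>Pow A. card S = t}. y ^ card S * (\<Prod>n\<in>S. f n))"
  proof (rule sum.group[symmetric])
    show "card ` Pow A \<subseteq> {..K}"
      using assms by (auto dest: card_mono)
  qed (use assms in auto)
  also have "\<dots> = (\<Sum>t\<le>K. y ^ t * (\<Sum>S | S \<subseteq> A \<and> card S = t. \<Prod>n\<in>S. f n))"
    by (simp add: sum_distrib_left)
  finally show ?thesis .
qed

definition ut_den :: "int \<Rightarrow> nat \<Rightarrow> 'a::comm_ring_1 fps" where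
  "ut_den a n = 1 + of_int a * fps_X ^ n + fps_X ^ (2 * n)"

definition ut_term :: "int \<Rightarrow> nat \<Rightarrow> 'a::{comm_ring_1,inverse} fps" where
  "ut_term a n = fps_X ^ n * inverse (ut_den a n)"

definition odd_sets :: "nat \<Rightarrow> nat set set" where
  "odd_sets t = {S. finite S \<and> card S = t \<and> (\<forall>n\<in>S. odd n)}"

lemma Ut_altdef: "Ut a t = infsum (\<lambda>S. \<Prod>n\<in>S. ut_term a n) (odd_sets t)"
  unfolding Ut_def ut_term_def ut_den_def odd_sets_def ..

lemma ut_den_nth: "k < n \<Longrightarrow> ut_den a n $ k = (if k = 0 then 1 else 0)"
  by (simp add: ut_den_def fps_of_int[symmetric])

lemma ut_den_mult_inverse:
  "n \<ge> 1 \<Longrightarrow> ut_den a n * inverse (ut_den a n) = (1 :: 'a::field fps fps)"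
  by (rule fps_mult_inverse_eq_1) (simp add: ut_den_nth)

lemma prod_ut_term_nth_eq_0:
  assumes "finite S" "n \<in> S" "k < n"
  shows "(\<Prod>i\<in>S. ut_term a i :: 'a::{comm_ring_1,inverse} fps) $ k = 0"
proof -
  have "(\<Prod>i\<in>S. ut_term a i :: 'a fps)
      = fps_X ^ n * (inverse (ut_den a n) * (\<Prod>i\<in>S - {n}. ut_term a i))"
    using assms by (simp add: prod.remove ut_term_def mult.assoc)
  then show ?thesis
    using assms(3) by (simp add: fps_X_power_mult_nth)
qed

lemma Ut_nth:
  assumes "m < M"
  shows "Ut a t $ m = (\<Sum>S | S \<in> odd_sets t \<and> S \<subseteq> {..<M}. \<Prod>n\<in>S. ut_term a n) $ m"
proof -
  have vanish: "(\<Prod>n\<in>S. ut_term a n) $ m = 0"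
    if S: "S \<in> odd_sets t" and out: "\<not> S \<subseteq> {..<M'}" and m: "m < M'" for S M' m
  proof -
    obtain n where "n \<in> S" "n \<ge> M'"
      using out by (auto simp: subset_iff not_less)
    then show ?thesis
      using S m by (intro prod_ut_term_nth_eq_0[of S n]) (auto simp: odd_sets_def)
  qed
  have finite: "finite {S\<in>odd_sets t. S \<subseteq> {..<M'}}" for M'
    by (rule finite_subset[of _ "Pow {..<M'}"]) auto
  show ?thesis
    unfolding Ut_altdef
  proof (rule infsum_fps_nth)
    fix k
    show "finite {S\<in>odd_sets t. (\<Prod>n\<in>S. ut_term a n) $ k \<noteq> 0}"
      by (rule finite_subset[OF _ finite[of "Suc k"]]) (auto intro: vanish[of _ "Suc k"])
  qed (use vanish assms finite in auto)
qed

lemma Ut_nth_eq_0: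
  assumes "m < t"
  shows "Ut a t $ m = 0"
proof -
  have empty: "{S. S \<in> odd_sets t \<and> S \<subseteq> {..<Suc m}} = {}"
  proof (rule ccontr)
    assume "{S. S \<in> odd_sets t \<and> S \<subseteq> {..<Suc m}} \<noteq> {}"
    then obtain S where S: "S \<in> odd_sets t" "S \<subseteq> {..<Suc m}" by blast
    have "S \<subseteq> {1..m}"
    proof
      fix x assume "x \<in> S"
      with S show "x \<in> {1..m}"
        using odd_pos[of x] by (auto simp: odd_sets_def)
    qed
    then have "card S \<le> m"
      using card_mono[of "{1..m}" S] by simp
    then show False
      using S assms by (simp add: odd_sets_def)
  qed
  show ?thesis
    using Ut_nth[of m "Suc m" a t] unfolding empty by simp
qed

lemma Ut_genfun_cutoff:
  fixes y :: "'a::{comm_ring_1,inverse}"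
  shows "fps_cutoff (2 * N) (\<Sum>\<^sub>\<infinity>t. Ut a t * fps_const y ^ t)
       = fps_cutoff (2 * N) (\<Prod>n | n < 2 * N \<and> odd n. 1 + fps_const y * ut_term a n)"
proof (unfold fps_cutoff_eq_fps_cutoff_iff, intro allI impI)
  fix m assume m: "m < 2 * N"
  define Od where "Od = {n. n < 2 * N \<and> odd n}"
  have Od: "finite Od" "card Od \<le> 2 * N"
    using card_mono[of "{..<2 * N}" Od] by (auto simp: Od_def)
  have sets: "{S. S \<in> odd_sets t \<and> S \<subseteq> {..<2 * N}} = {S. S \<subseteq> Od \<and> card S = t}" for t
    using Od(1) by (auto simp: odd_sets_def Od_def intro: finite_subset)
  have "(\<Sum>\<^sub>\<infinity>t. Ut a t * fps_const y ^ t) $ m = (\<Sum>t\<le>2 * N. Ut a t * fps_const y ^ t) $ m"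
  proof (rule infsum_fps_nth)
    fix k
    show "finite {t \<in> UNIV. (Ut a t * fps_const y ^ t) $ k \<noteq> 0}"
    proof (rule finite_subset[of _ "{..k}"])
      show "{t \<in> UNIV. (Ut a t * fps_const y ^ t) $ k \<noteq> 0} \<subseteq> {..k}"
        by (auto simp: Ut_nth_eq_0 simp flip: not_less)
    qed simp
  qed (use m in \<open>auto simp: Ut_nth_eq_0\<close>)
  also have "\<dots>
      = (\<Sum>t\<le>2 * N. fps_const y ^ t * (\<Sum>S | S \<subseteq> Od \<and> card S = t. \<Prod>n\<in>S. ut_term a n)) $ m"
    unfolding fps_sum_nth fps_const_power fps_mult_left_const_nth fps_mult_right_const_nth
      Ut_nth[OF m] sets by (simp only: mult.commute)
  also have "\<dots> = (\<Prod>n\<in>Od. 1 + fps_const y * ut_term a n) $ m"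
    by (simp only: prod_one_plus_mult_expand[OF Od])
  finally show "(\<Sum>\<^sub>\<infinity>t. Ut a t * fps_const y ^ t) $ m
      = (\<Prod>n | n < 2 * N \<and> odd n. 1 + fps_const y * ut_term a n) $ m"
    unfolding Od_def .
qed

lemma prod_odd_one_plus_ut_term:
  fixes y :: "'a::field fps"
  shows "(\<Prod>n | n < 2 * N \<and> odd n. 1 + fps_const y * ut_term a n)
       = (\<Prod>k\<in>{1..N}. (1 + fps_const (y + of_int a) * fps_X ^ (2 * k - 1) + fps_X ^ (2 * (2 * k - 1)))
            * inverse (ut_den a (2 * k - 1)))"
proof -
  have factor: "1 + fps_const y * ut_term a n
      = (1 + fps_const (y + of_int a) * fps_X ^ n + fps_X ^ (2 * n)) * inverse (ut_den a n)"
    if "n \<ge> 1" for n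
  proof -
    have "1 + fps_const (y + of_int a) * fps_X ^ n + fps_X ^ (2 * n)
        = ut_den a n + fps_const y * fps_X ^ n"
      by (simp add: ut_den_def fps_of_int[symmetric] algebra_simps flip: fps_const_add)
    then show ?thesis
      using ut_den_mult_inverse[OF that, of a] by (simp add: ut_term_def algebra_simps)
  qed
  have "(\<Prod>n | n < 2 * N \<and> odd n. 1 + fps_const y * ut_term a n)
      = (\<Prod>k\<in>{1..N}. 1 + fps_const y * ut_term a (2 * k - 1))"
    by (rule prod.reindex_bij_witness[of _ "\<lambda>k. 2 * k - 1" "\<lambda>n. (n + 1) div 2"])
      (auto elim!: oddE)
  also have "\<dots> = (\<Prod>k\<in>{1..N}. (1 + fps_const (y + of_int a) * fps_X ^ (2 * k - 1)
      + fps_X ^ (2 * (2 * k - 1))) * inverse (ut_den a (2 * k - 1)))"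
    by (intro prod.cong refl factor) auto
  finally show ?thesis .
qed

lemma fps_infprod_ut_den_cutoff:
  "fps_cutoff (Suc N) (fps_infprod (\<lambda>n. inverse ((1 + of_int a * fps_X ^ (2 * n - 1)
      + fps_X ^ (2 * (2 * n - 1))) * (1 - fps_X ^ (2 * n)))))
   = fps_cutoff (Suc N)
       (\<Prod>n\<in>{1..N}. inverse (ut_den a (2 * n - 1) * (1 - fps_X ^ (2 * n))) :: 'a::field fps fps)"
  unfolding ut_den_def[symmetric]
proof (rule fps_infprod_cutoff)
  fix n :: nat assume n: "n \<ge> 1"
  let ?e = "ut_den a (2 * n - 1) * (1 - fps_X ^ (2 * n)) :: 'a fps fps"
  have "fps_cutoff n (ut_den a (2 * n - 1)) = fps_cutoff n 1"
    and "fps_cutoff n (1 - fps_X ^ (2 * n)) = fps_cutoff n (1 :: 'a fps fps)"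
    using n by (auto simp: fps_cutoff_eq_fps_cutoff_iff ut_den_nth)
  from fps_cutoff_mult_cong[OF this] have "fps_cutoff n ?e = fps_cutoff n 1"
    by simp
  moreover have "?e * inverse ?e = 1"
    using n by (intro fps_mult_inverse_eq_1) (simp add: ut_den_nth)
  ultimately show "fps_cutoff n (inverse ?e) = fps_cutoff n 1"
    by (rule fps_cutoff_inverse_eq_1)
qed

lemma prod_inverse_mult_jacobi_prod:
  fixes c :: "'a::field fps"
  shows "(\<Prod>n\<in>{1..N}. inverse (ut_den a (2 * n - 1) * (1 - fps_X ^ (2 * n)))) * jacobi_prod N c
       = (\<Prod>k\<in>{1..N}. (1 + fps_const c * fps_X ^ (2 * k - 1) + fps_X ^ (2 * (2 * k - 1)))
            * inverse (ut_den a (2 * k - 1)))"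
proof -
  define A :: "nat \<Rightarrow> 'a fps fps"
    where "A k = 1 + fps_const c * fps_X ^ (2 * k - 1) + fps_X ^ (2 * (2 * k - 1))" for k
  define d :: "nat \<Rightarrow> 'a fps fps" where "d k = ut_den a (2 * k - 1)" for k
  define e :: "nat \<Rightarrow> 'a fps fps" where "e k = 1 - fps_X ^ (2 * k)" for k
  have "inverse (d n * e n) * (A n * e n) = A n * inverse (d n)" if "n \<in> {1..N}" for n
  proof -
    have "(d n * e n) * inverse (d n * e n) = 1"
      using that by (intro fps_mult_inverse_eq_1) (simp add: d_def e_def ut_den_nth)
    then have "inverse (d n) = inverse (d n * e n) * e n"
      using that by (intro fps_inverse_eqI) (simp_all add: d_def ut_den_nth ac_simps)
    then show ?thesis by (simp add: ac_simps)
  qed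
  then have "(\<Prod>n\<in>{1..N}. inverse (d n * e n)) * ((\<Prod>k\<in>{1..N}. A k) * (\<Prod>k\<in>{1..N}. e k))
      = (\<Prod>k\<in>{1..N}. A k * inverse (d k))"
    by (simp only: prod.distrib[symmetric] cong: prod.cong)
  then show ?thesis
    unfolding jacobi_prod_def qpoch2_def A_def d_def e_def .
qed

lemma theta_series_cutoff:
  "fps_cutoff (Suc N) (1 + 2 * (\<Sum>\<^sub>\<infinity>n\<in>{1..}. poly (map_poly (\<lambda>c. fps_const (fps_const c)) (te n))
                    ((fps_const fps_X + of_int a + 2) * fps_const (fps_const (1 / 4)))
                  * fps_X ^ (n ^ 2)))
   = fps_cutoff (Suc N) (jacobi_sum N (fps_X + of_int a :: real fps))"
proof -
  define T where "T n = poly (map_poly (\<lambda>c. fps_const (fps_const c)) (te n))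
    ((fps_const fps_X + of_int a + 2) * fps_const (fps_const (1 / 4))) * fps_X ^ n\<^sup>2" for n
  have vanish: "T n $ k = 0" if "k < n" for n k
  proof -
    have "n \<le> n\<^sup>2" by (simp add: power2_eq_square)
    with that show ?thesis by (simp add: T_def fps_X_power_mult_right_nth)
  qed
  have "fps_cutoff (Suc N) (\<Sum>\<^sub>\<infinity>n\<in>{1..}. T n) = fps_cutoff (Suc N) (\<Sum>n\<in>{1..N}. T n)"
    unfolding fps_cutoff_eq_fps_cutoff_iff
  proof (intro allI impI infsum_fps_nth)
    show "finite {n \<in> {1..}. T n $ k \<noteq> 0}" for k
    proof (rule finite_subset[of _ "{..k}"])
      show "{n \<in> {1..}. T n $ k \<noteq> 0} \<subseteq> {..k}"
        using vanish[of k] by (auto simp flip: not_less)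
    qed simp
  qed (auto intro: vanish)
  then have "fps_cutoff (Suc N) (2 * (\<Sum>\<^sub>\<infinity>n\<in>{1..}. T n))
      = fps_cutoff (Suc N) (2 * (\<Sum>n\<in>{1..N}. T n))"
    by (rule fps_cutoff_mult_cong[OF refl])
  then have cutoff: "fps_cutoff (Suc N) (1 + 2 * (\<Sum>\<^sub>\<infinity>n\<in>{1..}. T n))
      = fps_cutoff (Suc N) (1 + 2 * (\<Sum>n\<in>{1..N}. T n))"
    by (simp only: fps_cutoff_add)
  have "2 * T n = fps_const (lucasV n (fps_X + of_int a)) * fps_X ^ n\<^sup>2" for n
    unfolding T_def by (simp only: mult.assoc[symmetric] two_te_eval)
  then have "1 + 2 * (\<Sum>n\<in>{1..N}. T n) = jacobi_sum N (fps_X + of_int a)"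
    unfolding jacobi_sum_def sum_distrib_left by (simp only:)
  with cutoff show ?thesis
    unfolding T_def by (simp only:)
qed

theorem mainTheorem1:
  fixes a :: int
  assumes "a \<in> {-2, -1, 0, 1, 2}"
  shows "(\<Sum>\<^sub>\<infinity>t. Ut a t * fps_const (fps_X :: real fps) ^ t) =
    fps_infprod (\<lambda>n. inverse ((1 + of_int a * fps_X ^ (2 * n - 1) + fps_X ^ (2 * (2 * n - 1)))
                              * (1 - fps_X ^ (2 * n))))
    * (1 + 2 * (\<Sum>\<^sub>\<infinity>n\<in>{1..}. poly (map_poly (\<lambda>c. fps_const (fps_const c)) (te n))
                    ((fps_const fps_X + of_int a + 2) * fps_const (fps_const (1 / 4)))
                  * fps_X ^ (n ^ 2)))"
  (is "?U = ?P * ?\<Theta>")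
proof (rule fps_ext)
  fix m
  define N where "N = Suc m"
  define c :: "real fps" where "c = fps_X + of_int a"
  define P :: "real fps fps"
    where "P = (\<Prod>n\<in>{1..N}. inverse (ut_den a (2 * n - 1) * (1 - fps_X ^ (2 * n))))"
  have "fps_of_poly (pcompose [:0, 1:] [:of_int a, 1:]) = c"
    by (simp add: c_def pcompose_pCons fps_of_poly_linear fps_of_int)
  then have "fps_cutoff (Suc N) (jacobi_sum N c) = fps_cutoff (Suc N) (jacobi_prod N c)"
    using jacobi_prod_cutoff[OF ring_hom_fps_of_poly_pcompose, of N "[:of_int a, 1:]"] by simp
  then have "fps_cutoff (Suc N) (?P * ?\<Theta>) = fps_cutoff (Suc N) (P * jacobi_prod N c)"
    using fps_infprod_ut_den_cutoff[of N a] theta_series_cutoff[of N a]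
    by (intro fps_cutoff_mult_cong) (simp_all add: P_def c_def)
  also have "P * jacobi_prod N c = (\<Prod>n | n < 2 * N \<and> odd n. 1 + fps_const fps_X * ut_term a n)"
    unfolding P_def prod_inverse_mult_jacobi_prod prod_odd_one_plus_ut_term c_def ..
  also have "fps_cutoff (Suc N) \<dots> = fps_cutoff (Suc N) ?U"
    using fps_cutoff_eq_mono[OF Ut_genfun_cutoff[symmetric], of "Suc N" N] by (simp add: N_def)
  finally show "?U $ m = (?P * ?\<Theta>) $ m"
    by (rule fps_cutoff_eq_nth[symmetric]) (simp add: N_def)
qed

end
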